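(* Let $E_0>0$, $n\ge0$ real, $C>0$, and let $\phi:(-\infty,1]\to\mathbb R_+$ be continuous on $[0,1]$ with $\phi(x)=0$ for $x<0$ and $\lim_{x\to0^+}x^{-n}\phi(x)=C$. With $\epsilon=E_0/V-1$, as $V\to E_0^-$, $\varrho(V)\sim4\sqrt2\,\pi C A_n\,\epsilon^{n+3/2}$ and $p(V)\sim2^{3/2}\tfrac{4}{3}\pi C B_n\,\epsilon^{n+5/2}$, where $A_n=\frac{\sqrt\pi\,\Gamma(n+1)}{2\Gamma(n+5/2)}$, $B_n=\frac{3\sqrt\pi\,\Gamma(n+1)}{4\Gamma(n+7/2)}$, and $a\sim b$ means $a/b\to1$. In particular $p\sim K\varrho^\gamma$ as $V\to E_0^-$ with $\gamma=\frac{2n+5}{2n+3}$ and $K=\frac23\,(4\sqrt2\pi C)^{-2/(2n+3)}\,B_n\,A_n^{-(2n+5)/(2n+3)}$.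
   Context: For $V\in(0,E_0]$: $\varrho(V)=\frac{4\pi}{V^3}\int_V^{E_0}\phi(1-E/E_0)E^2\sqrt{(E/V)^2-1}\,dE$, $p(V)=\frac{4\pi}{3V}\int_V^{E_0}\phi(1-E/E_0)[(E/V)^2-1]^{3/2}dE$. $\Gamma$ here denotes the Gamma function. *)

theory Defs
  imports "HOL-Analysis.Analysis"
begin

definition rho_fn :: "real \<Rightarrow> (real \<Rightarrow> real) \<Rightarrow> real \<Rightarrow> real" where
  "rho_fn E0 \<phi> V = 4 * pi / V ^ 3 *
     integral {V..E0} (\<lambda>E. \<phi> (1 - E / E0) * E ^ 2 * sqrt ((E / V) ^ 2 - 1))"

definition p_fn :: "real \<Rightarrow> (real \<Rightarrow> real) \<Rightarrow> real \<Rightarrow> real" where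
  "p_fn E0 \<phi> V = 4 * pi / (3 * V) *
     integral {V..E0} (\<lambda>E. \<phi> (1 - E / E0) * ((E / V) ^ 2 - 1) powr (3 / 2))"

definition A_const :: "real \<Rightarrow> real" where
  "A_const n = sqrt pi * Gamma (n + 1) / (2 * Gamma (n + 5 / 2))"

definition B_const :: "real \<Rightarrow> real" where
  "B_const n = 3 * sqrt pi * Gamma (n + 1) / (4 * Gamma (n + 7 / 2))"

end

theory Submission
  imports Defs
begin

text \<open>Substituting \<open>E = V (1 + \<epsilon> x)\<close> maps \<open>[V, E\<^sub>0]\<close> onto \<open>[0, 1]\<close> and the argument of
  \<open>\<phi>\<close> to \<open>\<epsilon> (1 - x) / (1 + \<epsilon>)\<close>. Writing \<open>\<phi> y = y\<^sup>n g y\<close> with \<open>g\<close> continuous on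
  \<open>[0, 1]\<close> and \<open>g 0 = C\<close>, the integrands divided by \<open>\<epsilon>\<^sup>n\<close> become \<open>k(\<epsilon>, x) (1 - x)\<^sup>n\<close> with
  \<open>k\<close> jointly continuous on \<open>[0, 1]\<^sup>2\<close>. Uniform continuity of \<open>k\<close> lets \<open>\<epsilon> \<rightarrow> 0\<close> pass under
  the integral, which leaves \<open>C\<close> times the Beta integrals \<open>B(3/2, n+1)\<close> and \<open>B(5/2, n+1)\<close>.
  Eliminating \<open>\<epsilon>\<close> between the two asymptotics gives the power law \<open>p \<sim> K \<rho>\<^sup>\<gamma>\<close>.\<close>

lemma uniform_limit_at_within_of_continuous_on_Times:
  fixes K :: "'a::metric_space \<Rightarrow> 'b::metric_space \<Rightarrow> 'c::metric_space"
  assumes cont: "continuous_on (T \<times> S) (\<lambda>p. K (fst p) (snd p))"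
    and "compact T" "compact S" "t0 \<in> T"
  shows "uniform_limit S K (K t0) (at t0 within T)"
proof (rule uniform_limitI)
  fix \<eta> :: real assume "\<eta> > 0"
  have "uniformly_continuous_on (T \<times> S) (\<lambda>p. K (fst p) (snd p))"
    using assms by (intro compact_uniformly_continuous compact_Times)
  then obtain d where "d > 0" and d: "\<And>p q. p \<in> T \<times> S \<Longrightarrow> q \<in> T \<times> S \<Longrightarrow> dist q p < d \<Longrightarrow>
      dist (K (fst q) (snd q)) (K (fst p) (snd p)) < \<eta>"
    unfolding uniformly_continuous_on_def using \<open>\<eta> > 0\<close> by metis
  show "\<forall>\<^sub>F t in at t0 within T. \<forall>x\<in>S. dist (K t x) (K t0 x) < \<eta>"
    unfolding eventually_at
  proof (intro exI[of _ d] conjI ballI impI)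
    fix t x assume "t \<in> T" "t \<noteq> t0 \<and> dist t t0 < d" "x \<in> S"
    then show "dist (K t x) (K t0 x) < \<eta>"
      using d[of "(t0, x)" "(t, x)"] \<open>t0 \<in> T\<close> by (simp add: dist_Pair_Pair)
  qed (fact \<open>d > 0\<close>)
qed

lemma uniform_limit_integral_open_interval:
  fixes f :: "'a \<Rightarrow> real \<Rightarrow> 'b::banach"
  assumes lim: "uniform_limit {a<..<b} f g F"
    and f: "\<forall>\<^sub>F t in F. f t integrable_on {a..b}" and g: "g integrable_on {a..b}"
  shows "((\<lambda>t. integral {a..b} (f t)) \<longlongrightarrow> integral {a..b} g) F"
proof (rule tendstoI)
  fix \<epsilon> :: real assume "\<epsilon> > 0"
  define \<eta> where "\<eta> = \<epsilon> / (\<bar>b - a\<bar> + 1)"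
  have "\<eta> > 0"
    using \<open>\<epsilon> > 0\<close> by (simp add: \<eta>_def)
  have "(if a \<le> b then b - a else 0) * \<eta> \<le> \<bar>b - a\<bar> * \<eta>"
    using \<open>\<eta> > 0\<close> by (intro mult_right_mono) auto
  also have "\<dots> < \<epsilon>"
    using \<open>\<epsilon> > 0\<close> by (simp add: \<eta>_def field_simps)
  finally have "(if a \<le> b then b - a else 0) * \<eta> < \<epsilon>" .
  show "\<forall>\<^sub>F t in F. dist (integral {a..b} (f t)) (integral {a..b} g) < \<epsilon>"
    using f uniform_limitD[OF lim \<open>\<eta> > 0\<close>]
  proof eventually_elim
    case (elim t)
    have "(\<lambda>x. f t x - g x) integrable_on {a<..<b}"
      using elim g by (simp add: integrable_on_Icc_iff_Ioo[symmetric] integrable_diff)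
    then have "norm (integral {a<..<b} (\<lambda>x. f t x - g x)) \<le> integral {a<..<b} (\<lambda>x. \<eta>)"
      using elim by (intro integral_norm_bound_integral)
        (auto simp: integrable_on_Icc_iff_Ioo[symmetric] dist_norm less_imp_le)
    also have "\<dots> = (if a \<le> b then b - a else 0) * \<eta>"
      by (simp add: integral_open_interval_real[symmetric])
    finally show ?case
      using elim g \<open>(if a \<le> b then b - a else 0) * \<eta> < \<epsilon>\<close>
      by (simp add: dist_norm integral_open_interval_real[symmetric] integral_diff
          integrable_on_Icc_iff_Ioo[symmetric])
  qed
qed

definition profile_ratio :: "(real \<Rightarrow> real) \<Rightarrow> real \<Rightarrow> real \<Rightarrow> real \<Rightarrow> real" where
  "profile_ratio \<phi> n C y = (if y = 0 then C else \<phi> y / y powr n)"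

lemma continuous_on_profile_ratio:
  assumes "continuous_on {0..1} \<phi>" and "((\<lambda>y. \<phi> y / y powr n) \<longlongrightarrow> C) (at_right 0)"
  shows "continuous_on {0..1} (profile_ratio \<phi> n C)"
  unfolding continuous_on_eq_continuous_within
proof
  fix y :: real assume y: "y \<in> {0..1}"
  show "continuous (at y within {0..1}) (profile_ratio \<phi> n C)"
  proof (cases "y = 0")
    case True
    have "\<forall>\<^sub>F z in at_right 0. \<phi> z / z powr n = profile_ratio \<phi> n C z"
      using eventually_at_right_less[of "0::real"] by eventually_elim (auto simp: profile_ratio_def)
    with assms(2) have "(profile_ratio \<phi> n C \<longlongrightarrow> profile_ratio \<phi> n C 0) (at_right 0)"
      by (simp add: tendsto_cong[symmetric] profile_ratio_def)
    then show ?thesis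
      using True by (simp add: continuous_within at_within_Icc_at_right)
  next
    case False
    have "continuous_on {0<..1} (\<lambda>z. \<phi> z / z powr n)"
      by (intro continuous_intros continuous_on_subset[OF assms(1)]) auto
    then have "continuous_on {0<..1} (profile_ratio \<phi> n C)"
      by (rule continuous_on_cong[THEN iffD1, OF refl, rotated]) (simp add: profile_ratio_def)
    moreover have "at y within {0..1} = at y within {0<..1}"
      using False y by (intro at_within_nhd[of y "{0<..}"]) auto
    ultimately show ?thesis
      using False y by (simp add: continuous_on_eq_continuous_within)
  qed
qed

lemma rescaled_argument_in_unit_interval:
  fixes e x :: real
  assumes "e \<ge> 0" and "x \<in> {0..1}"
  shows "e * (1 - x) / (1 + e) \<in> {0..1}"
proof -
  have "e * (1 - x) \<le> 1 + e"
    using assms by (simp add: algebra_simps)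
  then show ?thesis
    using assms by (auto simp: divide_le_eq)
qed

lemma continuous_on_rescaled_profile:
  assumes "continuous_on {0..1} \<phi>" and "e \<ge> 0"
  shows "continuous_on {0..1} (\<lambda>x::real. \<phi> (e * (1 - x) / (1 + e)))"
  using assms rescaled_argument_in_unit_interval
  by (intro continuous_on_compose2[OF assms(1)] continuous_intros) (auto simp: add_pos_nonneg)

lemma rescaled_profile_eq:
  fixes e x :: real
  assumes "e > 0" and "0 \<le> x" "x < 1"
  shows "\<phi> (e * (1 - x) / (1 + e)) / e powr n
    = profile_ratio \<phi> n C (e * (1 - x) / (1 + e)) * (1 + e) powr (- n) * (1 - x) powr n"
proof -
  have "(e * (1 - x) / (1 + e)) powr n = e powr n * (1 - x) powr n / (1 + e) powr n"
    using assms by (simp add: powr_divide powr_mult)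
  moreover have "e powr n > 0" "(1 - x) powr n > 0" "(1 + e) powr (- n) > 0"
    using assms by auto
  ultimately show ?thesis
    using assms by (simp add: profile_ratio_def powr_minus field_simps)
qed

lemma tendsto_rescaled_profile_integral:
  fixes \<phi> :: "real \<Rightarrow> real" and W :: "real \<Rightarrow> real \<Rightarrow> real"
  assumes \<phi>: "continuous_on {0..1} \<phi>" and lim: "((\<lambda>y. \<phi> y / y powr n) \<longlongrightarrow> C) (at_right 0)"
    and "n \<ge> 0"
    and W: "continuous_on ({0..1} \<times> {0..1}) (\<lambda>p. W (fst p) (snd p))"
    and I: "((\<lambda>x. W 0 x * (1 - x) powr n) has_integral I) {0..1}"
  shows "((\<lambda>e. integral {0..1} (\<lambda>x. \<phi> (e * (1 - x) / (1 + e)) / e powr n * W e x))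
    \<longlongrightarrow> C * I) (at_right 0)"
proof -
  define K where "K e x = profile_ratio \<phi> n C (e * (1 - x) / (1 + e)) * (1 + e) powr (- n) * W e x"
    for e x :: real
  have "continuous_on ({0..1} \<times> {0..1})
      (\<lambda>p. profile_ratio \<phi> n C (fst p * (1 - snd p) / (1 + fst p)))"
    using rescaled_argument_in_unit_interval
    by (intro continuous_on_compose2[OF continuous_on_profile_ratio[OF \<phi> lim]] continuous_intros)
      (auto simp: add_pos_nonneg)
  then have K_cont: "continuous_on ({0..1} \<times> {0..1}) (\<lambda>p. K (fst p) (snd p))"
    unfolding K_def using W by (intro continuous_intros) auto
  have "uniform_limit {0..1} K (K 0) (at_right 0)"
    using uniform_limit_at_within_of_continuous_on_Times[OF K_cont compact_Icc compact_Icc, of 0]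
    by (simp add: at_within_Icc_at_right)
  then have K_lim: "uniform_limit {0<..<1} K (K 0) (at_right 0)"
    by (rule uniform_limit_on_subset) auto
  have "continuous_on {0..1} (K 0)"
    by (rule continuous_on_compose2[OF K_cont, of _ "\<lambda>x. (0, x)", simplified])
      (auto intro!: continuous_on_Pair continuous_on_const continuous_on_id)
  then have "bounded (K 0 ` {0<..<1})"
    by (intro bounded_subset[OF compact_imp_bounded[OF compact_continuous_image]]) auto
  moreover have "bounded ((\<lambda>x. (1 - x) powr n) ` {0<..<1})"
    using \<open>n \<ge> 0\<close>
    by (intro bounded_subset[OF bounded_closed_interval, of _ 0 1]) (auto intro!: powr_le1)
  ultimately have "uniform_limit {0<..<1} (\<lambda>e x. K e x * (1 - x) powr n)
      (\<lambda>x. K 0 x * (1 - x) powr n) (at_right 0)"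
    by (intro uniform_lim_mult[OF K_lim uniform_limit_const])
  moreover have "\<forall>\<^sub>F e in at_right 0. \<forall>x\<in>{0<..<1}.
      K e x * (1 - x) powr n = \<phi> (e * (1 - x) / (1 + e)) / e powr n * W e x"
    using eventually_at_right_less[of "0::real"]
    by eventually_elim (simp add: K_def rescaled_profile_eq[where C = C])
  ultimately have "uniform_limit {0<..<1} (\<lambda>e x. \<phi> (e * (1 - x) / (1 + e)) / e powr n * W e x)
      (\<lambda>x. C * (W 0 x * (1 - x) powr n)) (at_right 0)"
    by (subst (asm) uniform_limit_cong) (auto simp: K_def profile_ratio_def)
  moreover have "\<forall>\<^sub>F e in at_right 0.
      (\<lambda>x. \<phi> (e * (1 - x) / (1 + e)) / e powr n * W e x) integrable_on {0..1}"
    unfolding eventually_at_right_field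
  proof (intro exI[of _ 1] conjI allI impI)
    fix e :: real assume "0 < e" "e < 1"
    then have "continuous_on {0..1} (W e)"
      by (intro continuous_on_compose2[OF W, of _ "\<lambda>x. (e, x)", simplified] continuous_intros) auto
    moreover have "continuous_on {0..1} (\<lambda>x. \<phi> (e * (1 - x) / (1 + e)))"
      using \<open>0 < e\<close> by (intro continuous_on_rescaled_profile[OF \<phi>]) simp
    moreover have "\<forall>x\<in>{0..1}. e powr n \<noteq> 0"
      using \<open>0 < e\<close> by simp
    ultimately show "(\<lambda>x. \<phi> (e * (1 - x) / (1 + e)) / e powr n * W e x) integrable_on {0..1}"
      by (intro integrable_continuous_real continuous_on_mult continuous_on_divide continuous_on_const)
  qed simp
  moreover have "(\<lambda>x. C * (W 0 x * (1 - x) powr n)) integrable_on {0..1}"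
    using has_integral_mult_right[OF I] by blast
  ultimately have "((\<lambda>e. integral {0..1} (\<lambda>x. \<phi> (e * (1 - x) / (1 + e)) / e powr n * W e x))
      \<longlongrightarrow> integral {0..1} (\<lambda>x. C * (W 0 x * (1 - x) powr n))) (at_right 0)"
    by (rule uniform_limit_integral_open_interval)
  moreover have "integral {0..1} (\<lambda>x. C * (W 0 x * (1 - x) powr n)) = C * I"
    by (intro integral_unique has_integral_mult_right I)
  ultimately show ?thesis
    by (simp only:)
qed

lemma integral_Icc_rescaled:
  fixes f :: "real \<Rightarrow> real"
  assumes "V > 0" "e > 0" and "((\<lambda>x. f (V * (1 + e * x))) has_integral I) {0..1}"
  shows "integral {V..V * (1 + e)} f = V * e * I"
proof -
  have "((\<lambda>x. f ((V * e) *\<^sub>R x + V)) has_integral (V * e * I) /\<^sub>R (V * e) ^ DIM(real))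
      (cbox ((V - V) /\<^sub>R (V * e)) ((V * (1 + e) - V) /\<^sub>R (V * e)))"
    using assms by (simp add: algebra_simps)
  then have "(f has_integral V * e * I) (cbox V (V * (1 + e)))"
    using assms by (subst (asm) has_integral_affinity_iff) auto
  then show ?thesis
    by (simp add: integral_unique)
qed

lemma rescaled_energy_identities:
  fixes V e x :: real
  assumes "V > 0" "e > 0"
  shows "1 - V * (1 + e * x) / (V * (1 + e)) = e * (1 - x) / (1 + e)"
    and "(V * (1 + e * x) / V) ^ 2 - 1 = e * (x * (2 + e * x))"
proof -
  have "V * (1 + e * x) / (V * (1 + e)) = (1 + e * x) / (1 + e)"
    using assms by simp
  then show "1 - V * (1 + e * x) / (V * (1 + e)) = e * (1 - x) / (1 + e)"
    using assms by (simp add: field_simps)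
  show "(V * (1 + e * x) / V) ^ 2 - 1 = e * (x * (2 + e * x))"
    using assms by (simp add: field_simps power2_eq_square)
qed

lemma powr_three_halves: "y \<ge> 0 \<Longrightarrow> y powr (3 / 2) = y * sqrt (y :: real)"
  using powr_add[of y 1 "1 / 2"] by (simp add: powr_half_sqrt)

lemma rho_fn_rescaled:
  assumes "V > 0" "e > 0" and \<phi>: "continuous_on {0..1} \<phi>"
  shows "rho_fn (V * (1 + e)) \<phi> V = 4 * pi * e powr (n + 3 / 2) * integral {0..1}
    (\<lambda>x. \<phi> (e * (1 - x) / (1 + e)) / e powr n * ((1 + e * x) ^ 2 * sqrt (x * (2 + e * x))))"
    (is "_ = _ * integral {0..1} ?R")
proof -
  have "?R integrable_on {0..1}"
    using assms by (intro integrable_continuous_real continuous_intros continuous_on_rescaled_profile) auto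
  then have "((\<lambda>x. V\<^sup>2 * e powr (n + 1 / 2) * ?R x) has_integral
      V\<^sup>2 * e powr (n + 1 / 2) * integral {0..1} ?R) {0..1}"
    by (intro has_integral_mult_right integrable_integral)
  moreover have "\<phi> (1 - V * (1 + e * x) / (V * (1 + e))) * (V * (1 + e * x))\<^sup>2
      * sqrt ((V * (1 + e * x) / V)\<^sup>2 - 1) = V\<^sup>2 * e powr (n + 1 / 2) * ?R x"
    if "x \<in> {0..1}" for x
  proof -
    have "sqrt (e * (x * (2 + e * x))) = sqrt e * sqrt (x * (2 + e * x))"
      by (simp add: real_sqrt_mult)
    moreover have "e powr (n + 1 / 2) = e powr n * sqrt e"
      using assms by (simp add: powr_add powr_half_sqrt)
    moreover have "e powr n > 0"
      using assms by simp
    ultimately show ?thesis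
      unfolding rescaled_energy_identities[OF assms(1,2)] by (simp add: field_simps power2_eq_square)
  qed
  ultimately have "integral {V..V * (1 + e)}
      (\<lambda>E. \<phi> (1 - E / (V * (1 + e))) * E\<^sup>2 * sqrt ((E / V)\<^sup>2 - 1))
      = V * e * (V\<^sup>2 * e powr (n + 1 / 2) * integral {0..1} ?R)"
    using assms by (intro integral_Icc_rescaled) (auto intro: has_integral_eq)
  moreover have "e * e powr (n + 1 / 2) = e powr (n + 3 / 2)"
    using assms powr_add[of e 1 "n + 1 / 2"] by (simp add: add_ac)
  ultimately show ?thesis
    using assms by (simp add: rho_fn_def field_simps power3_eq_cube power2_eq_square)
qed

lemma p_fn_rescaled:
  assumes "V > 0" "e > 0" and \<phi>: "continuous_on {0..1} \<phi>"
  shows "p_fn (V * (1 + e)) \<phi> V = 4 * pi / 3 * e powr (n + 5 / 2) * integral {0..1}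
    (\<lambda>x. \<phi> (e * (1 - x) / (1 + e)) / e powr n * (x * (2 + e * x) * sqrt (x * (2 + e * x))))"
    (is "_ = _ * integral {0..1} ?R")
proof -
  have "?R integrable_on {0..1}"
    using assms by (intro integrable_continuous_real continuous_intros continuous_on_rescaled_profile) auto
  then have "((\<lambda>x. e powr (n + 3 / 2) * ?R x) has_integral
      e powr (n + 3 / 2) * integral {0..1} ?R) {0..1}"
    by (intro has_integral_mult_right integrable_integral)
  moreover have "\<phi> (1 - V * (1 + e * x) / (V * (1 + e)))
      * ((V * (1 + e * x) / V)\<^sup>2 - 1) powr (3 / 2) = e powr (n + 3 / 2) * ?R x"
    if "x \<in> {0..1}" for x
  proof -
    have "(e * (x * (2 + e * x))) powr (3 / 2) = e powr (3 / 2) * (x * (2 + e * x) * sqrt (x * (2 + e * x)))"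
      using assms that by (simp add: powr_mult powr_three_halves real_sqrt_mult)
    moreover have "e powr (n + 3 / 2) = e powr n * e powr (3 / 2)"
      by (rule powr_add)
    moreover have "e powr n > 0"
      using assms by simp
    ultimately show ?thesis
      unfolding rescaled_energy_identities[OF assms(1,2)] by (simp add: field_simps)
  qed
  ultimately have "integral {V..V * (1 + e)}
      (\<lambda>E. \<phi> (1 - E / (V * (1 + e))) * ((E / V)\<^sup>2 - 1) powr (3 / 2))
      = V * e * (e powr (n + 3 / 2) * integral {0..1} ?R)"
    using assms by (intro integral_Icc_rescaled) (auto intro: has_integral_eq)
  moreover have "e * e powr (n + 3 / 2) = e powr (n + 5 / 2)"
    using assms powr_add[of e 1 "n + 3 / 2"] by (simp add: add_ac)
  ultimately show ?thesis
    using assms by (simp add: p_fn_def field_simps)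
qed

lemma Gamma_three_halves: "Gamma (3 / 2 :: real) = sqrt pi / 2"
proof -
  have "1 / 2 \<notin> (\<int>\<^sub>\<le>\<^sub>0 :: real set)"
    by (auto elim!: nonpos_Ints_cases)
  from Gamma_plus1[OF this] show ?thesis
    by (simp add: Gamma_one_half_real)
qed

lemma Gamma_five_halves: "Gamma (5 / 2 :: real) = 3 * sqrt pi / 4"
proof -
  have "3 / 2 \<notin> (\<int>\<^sub>\<le>\<^sub>0 :: real set)"
    by (auto elim!: nonpos_Ints_cases)
  from Gamma_plus1[OF this] show ?thesis
    by (simp add: Gamma_three_halves)
qed

lemma A_const_eq_Beta: "A_const n = Beta (3 / 2) (n + 1)"
  by (simp add: A_const_def Beta_def Gamma_three_halves add_ac)

lemma B_const_eq_Beta: "B_const n = Beta (5 / 2) (n + 1)"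
  by (simp add: B_const_def Beta_def Gamma_five_halves add_ac)

lemma A_const_pos: "n \<ge> 0 \<Longrightarrow> A_const n > 0"
  unfolding A_const_def by (intro divide_pos_pos mult_pos_pos Gamma_real_pos) auto

lemma B_const_pos: "n \<ge> 0 \<Longrightarrow> B_const n > 0"
  unfolding B_const_def by (intro divide_pos_pos mult_pos_pos Gamma_real_pos) auto

lemma has_integral_A_const:
  assumes "n \<ge> 0"
  shows "((\<lambda>x. sqrt (2 * x) * (1 - x) powr n) has_integral sqrt 2 * A_const n) {0..1}"
proof -
  have "((\<lambda>x. sqrt 2 * (x powr (3 / 2 - 1) * (1 - x) powr (n + 1 - 1)))
      has_integral sqrt 2 * A_const n) {0..1}"
    using has_integral_mult_right[OF has_integral_Beta_real[of "3 / 2" "n + 1"], of "sqrt 2"] assms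
    by (simp add: A_const_eq_Beta)
  then show ?thesis
    by (rule has_integral_eq[rotated]) (simp add: powr_half_sqrt real_sqrt_mult)
qed

lemma has_integral_B_const:
  assumes "n \<ge> 0"
  shows "((\<lambda>x. (2 * x) powr (3 / 2) * (1 - x) powr n) has_integral 2 powr (3 / 2) * B_const n) {0..1}"
proof -
  have "((\<lambda>x. 2 powr (3 / 2) * (x powr (5 / 2 - 1) * (1 - x) powr (n + 1 - 1)))
      has_integral 2 powr (3 / 2) * B_const n) {0..1}"
    using has_integral_mult_right[OF has_integral_Beta_real[of "5 / 2" "n + 1"], of "2 powr (3 / 2)"] assms
    by (simp add: B_const_eq_Beta)
  then show ?thesis
    by (rule has_integral_eq[rotated]) (simp add: powr_mult)
qed

lemma filterlim_rescaled_at_left: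
  fixes E0 :: real
  assumes "E0 > 0"
  shows "filterlim (\<lambda>V. E0 / V - 1) (at_right 0) (at_left E0)"
proof -
  have "((\<lambda>V. E0 / V - 1) \<longlongrightarrow> E0 / E0 - 1) (at_left E0)"
    using assms by (intro tendsto_intros) auto
  moreover have "\<forall>\<^sub>F V in at_left E0. E0 / V - 1 \<in> {0<..} \<and> E0 / V - 1 \<noteq> 0"
    unfolding eventually_at_left_field using assms
    by (intro exI[of _ 0]) (auto simp: field_simps)
  ultimately show ?thesis
    using assms by (simp add: filterlim_at)
qed

lemma tendsto_ratio_at_left_rescaled:
  fixes Q h :: "real \<Rightarrow> real" and E0 :: real
  assumes "E0 > 0" and "c \<noteq> 0" and "D \<noteq> 0" and lim: "(h \<longlongrightarrow> D / c) (at_right 0)"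
    and Q: "\<And>V. 0 < V \<Longrightarrow> V < E0 \<Longrightarrow> Q V = c * (E0 / V - 1) powr a * h (E0 / V - 1)"
  shows "((\<lambda>V. Q V / (D * (E0 / V - 1) powr a)) \<longlongrightarrow> 1) (at_left E0)"
proof -
  have "((\<lambda>e. c * h e / D) \<longlongrightarrow> c * (D / c) / D) (at_right 0)"
    using \<open>D \<noteq> 0\<close> by (intro tendsto_intros lim)
  then have "((\<lambda>e. c * h e / D) \<longlongrightarrow> 1) (at_right 0)"
    using assms by simp
  from filterlim_compose[OF this filterlim_rescaled_at_left[OF \<open>E0 > 0\<close>]]
  have "((\<lambda>V. c * h (E0 / V - 1) / D) \<longlongrightarrow> 1) (at_left E0)" .
  moreover have "\<forall>\<^sub>F V in at_left E0. c * h (E0 / V - 1) / D = Q V / (D * (E0 / V - 1) powr a)"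
    unfolding eventually_at_left_field using \<open>E0 > 0\<close>
  proof (intro exI[of _ 0] conjI allI impI)
    fix V assume "0 < V" "V < E0"
    moreover have "(E0 / V - 1) powr a > 0"
      using \<open>0 < V\<close> \<open>V < E0\<close> by (simp add: field_simps)
    ultimately show "c * h (E0 / V - 1) / D = Q V / (D * (E0 / V - 1) powr a)"
      using Q by simp
  qed
  ultimately show ?thesis
    by (rule tendsto_cong[THEN iffD1, rotated])
qed

lemma rho_fn_asymptotics:
  fixes E0 n C :: real
  assumes "E0 > 0" "n \<ge> 0" "C > 0" and \<phi>: "continuous_on {0..1} \<phi>"
    and lim: "((\<lambda>y. \<phi> y / y powr n) \<longlongrightarrow> C) (at_right 0)"
  shows "((\<lambda>V. rho_fn E0 \<phi> V / (4 * sqrt 2 * pi * C * A_const n * (E0 / V - 1) powr (n + 3 / 2)))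
    \<longlongrightarrow> 1) (at_left E0)"
proof (rule tendsto_ratio_at_left_rescaled[where c = "4 * pi"])
  have "((\<lambda>x. (1 + 0 * x)\<^sup>2 * sqrt (x * (2 + 0 * x)) * (1 - x) powr n)
      has_integral sqrt 2 * A_const n) {0..1}"
    using has_integral_A_const[OF \<open>n \<ge> 0\<close>] by (simp add: mult.commute)
  from tendsto_rescaled_profile_integral[where W = "\<lambda>e x. (1 + e * x)\<^sup>2 * sqrt (x * (2 + e * x))",
      OF \<phi> lim \<open>n \<ge> 0\<close> _ this]
  show "((\<lambda>e. integral {0..1} (\<lambda>x. \<phi> (e * (1 - x) / (1 + e)) / e powr n
      * ((1 + e * x)\<^sup>2 * sqrt (x * (2 + e * x)))))
    \<longlongrightarrow> 4 * sqrt 2 * pi * C * A_const n / (4 * pi)) (at_right 0)"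
    by (simp add: continuous_intros mult_ac)
  show "rho_fn E0 \<phi> V = 4 * pi * (E0 / V - 1) powr (n + 3 / 2) * integral {0..1}
      (\<lambda>x. \<phi> ((E0 / V - 1) * (1 - x) / (1 + (E0 / V - 1))) / (E0 / V - 1) powr n
        * ((1 + (E0 / V - 1) * x)\<^sup>2 * sqrt (x * (2 + (E0 / V - 1) * x))))"
    if "0 < V" "V < E0" for V
    using rho_fn_rescaled[OF \<open>0 < V\<close> _ \<phi>, of "E0 / V - 1" n] that by (simp add: field_simps)
qed (use assms A_const_pos[of n] in auto)

lemma p_fn_asymptotics:
  fixes E0 n C :: real
  assumes "E0 > 0" "n \<ge> 0" "C > 0" and \<phi>: "continuous_on {0..1} \<phi>"
    and lim: "((\<lambda>y. \<phi> y / y powr n) \<longlongrightarrow> C) (at_right 0)"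
  shows "((\<lambda>V. p_fn E0 \<phi> V
      / (2 powr (3 / 2) * (4 / 3) * pi * C * B_const n * (E0 / V - 1) powr (n + 5 / 2)))
    \<longlongrightarrow> 1) (at_left E0)"
proof (rule tendsto_ratio_at_left_rescaled[where c = "4 * pi / 3"])
  have "((\<lambda>x. x * (2 + 0 * x) * sqrt (x * (2 + 0 * x)) * (1 - x) powr n)
      has_integral 2 powr (3 / 2) * B_const n) {0..1}"
    using has_integral_B_const[OF \<open>n \<ge> 0\<close>]
    by (rule has_integral_eq[rotated]) (simp add: powr_three_halves)
  from tendsto_rescaled_profile_integral[where W = "\<lambda>e x. x * (2 + e * x) * sqrt (x * (2 + e * x))",
      OF \<phi> lim \<open>n \<ge> 0\<close> _ this]
  show "((\<lambda>e. integral {0..1} (\<lambda>x. \<phi> (e * (1 - x) / (1 + e)) / e powr n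
      * (x * (2 + e * x) * sqrt (x * (2 + e * x)))))
    \<longlongrightarrow> 2 powr (3 / 2) * (4 / 3) * pi * C * B_const n / (4 * pi / 3)) (at_right 0)"
    by (simp add: continuous_intros mult_ac)
  show "p_fn E0 \<phi> V = 4 * pi / 3 * (E0 / V - 1) powr (n + 5 / 2) * integral {0..1}
      (\<lambda>x. \<phi> ((E0 / V - 1) * (1 - x) / (1 + (E0 / V - 1))) / (E0 / V - 1) powr n
        * (x * (2 + (E0 / V - 1) * x) * sqrt (x * (2 + (E0 / V - 1) * x))))"
    if "0 < V" "V < E0" for V
    using p_fn_rescaled[OF \<open>0 < V\<close> _ \<phi>, of "E0 / V - 1" n] that by (simp add: field_simps)
qed (use assms B_const_pos[of n] in auto)

lemma tendsto_power_law_ratio: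
  fixes f g h :: "'a \<Rightarrow> real"
  assumes f: "((\<lambda>t. f t / (a * h t powr \<alpha>)) \<longlongrightarrow> 1) F"
    and g: "((\<lambda>t. g t / (b * h t powr \<beta>)) \<longlongrightarrow> 1) F"
    and "a > 0" "b > 0" "\<alpha> \<noteq> 0" and h: "\<forall>\<^sub>F t in F. h t > 0"
  shows "((\<lambda>t. g t / (b / a powr (\<beta> / \<alpha>) * f t powr (\<beta> / \<alpha>))) \<longlongrightarrow> 1) F"
proof -
  define u where "u t = f t / (a * h t powr \<alpha>)" for t
  define w where "w t = g t / (b * h t powr \<beta>)" for t
  have "((\<lambda>t. w t / u t powr (\<beta> / \<alpha>)) \<longlongrightarrow> 1 / 1 powr (\<beta> / \<alpha>)) F"
    using f g unfolding u_def w_def by (intro tendsto_intros) auto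
  moreover have "\<forall>\<^sub>F t in F.
      w t / u t powr (\<beta> / \<alpha>) = g t / (b / a powr (\<beta> / \<alpha>) * f t powr (\<beta> / \<alpha>))"
    using h order_tendstoD(1)[OF f zero_less_one]
  proof eventually_elim
    case (elim t)
    then have "f t = a * h t powr \<alpha> * u t" "u t > 0"
      using \<open>a > 0\<close> by (simp_all add: u_def)
    then have "f t powr (\<beta> / \<alpha>) = a powr (\<beta> / \<alpha>) * h t powr \<beta> * u t powr (\<beta> / \<alpha>)"
      using \<open>a > 0\<close> \<open>\<alpha> \<noteq> 0\<close> elim by (simp add: powr_mult powr_powr)
    then show ?case
      using \<open>a > 0\<close> \<open>b > 0\<close> elim by (simp add: w_def)
  qed
  ultimately show ?thesis
    by (simp add: tendsto_cong)
qed

lemma power_law_constant: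
  fixes n C :: real
  assumes "n \<ge> 0" "C > 0"
  shows "2 powr (3 / 2) * (4 / 3) * pi * C * B_const n
      / (4 * sqrt 2 * pi * C * A_const n) powr ((2 * n + 5) / (2 * n + 3))
    = (2 / 3) * (4 * sqrt 2 * pi * C) powr (- 2 / (2 * n + 3)) * B_const n
      * A_const n powr (- (2 * n + 5) / (2 * n + 3))"
proof -
  define M where "M = 4 * sqrt 2 * pi * C"
  define A where "A = A_const n"
  define \<gamma> where "\<gamma> = (2 * n + 5) / (2 * n + 3)"
  have "M > 0" "A > 0"
    using assms A_const_pos by (simp_all add: M_def A_def)
  have prefactor: "2 powr (3 / 2) * (4 / 3) * pi * C = 2 / 3 * M"
    by (simp add: M_def powr_three_halves)
  have "(M * A) powr \<gamma> = M powr \<gamma> * A powr \<gamma>"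
    using \<open>M > 0\<close> \<open>A > 0\<close> by (simp add: powr_mult)
  then have "2 powr (3 / 2) * (4 / 3) * pi * C * B_const n / (M * A) powr \<gamma>
      = 2 / 3 * (M / M powr \<gamma>) * B_const n * (1 / A powr \<gamma>)"
    unfolding prefactor by simp
  also have "M / M powr \<gamma> = M powr (- 2 / (2 * n + 3))"
    using \<open>M > 0\<close> powr_diff[of M 1 \<gamma>] assms by (simp add: \<gamma>_def field_simps)
  also have "1 / A powr \<gamma> = A powr (- (2 * n + 5) / (2 * n + 3))"
    using powr_minus_divide[of A \<gamma>] by (simp add: \<gamma>_def minus_divide_left)
  finally show ?thesis
    unfolding M_def A_def \<gamma>_def by simp
qed

theorem mainTheorem9:
  fixes E0 n C :: real and \<phi> :: "real \<Rightarrow> real"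
  assumes "E0 > 0" and "n \<ge> 0" and "C > 0"
    and "\<And>x. x \<le> 1 \<Longrightarrow> \<phi> x \<ge> 0"
    and "continuous_on {0..1} \<phi>"
    and "\<And>x. x < 0 \<Longrightarrow> \<phi> x = 0"
    and "((\<lambda>x. \<phi> x / x powr n) \<longlongrightarrow> C) (at_right 0)"
  shows "((\<lambda>V. rho_fn E0 \<phi> V /
            (4 * sqrt 2 * pi * C * A_const n * (E0 / V - 1) powr (n + 3 / 2)))
           \<longlongrightarrow> 1) (at_left E0)
    \<and> ((\<lambda>V. p_fn E0 \<phi> V /
            (2 powr (3 / 2) * (4 / 3) * pi * C * B_const n * (E0 / V - 1) powr (n + 5 / 2)))
           \<longlongrightarrow> 1) (at_left E0)
    \<and> ((\<lambda>V. p_fn E0 \<phi> V /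
            ((2 / 3) * (4 * sqrt 2 * pi * C) powr (- 2 / (2 * n + 3)) * B_const n
               * A_const n powr (- (2 * n + 5) / (2 * n + 3))
               * rho_fn E0 \<phi> V powr ((2 * n + 5) / (2 * n + 3))))
           \<longlongrightarrow> 1) (at_left E0)"
proof -
  note \<rho> = rho_fn_asymptotics[OF assms(1-3,5,7)]
  note p = p_fn_asymptotics[OF assms(1-3,5,7)]
  have "\<forall>\<^sub>F V in at_left E0. E0 / V - 1 > 0"
    unfolding eventually_at_left_field using \<open>E0 > 0\<close>
    by (intro exI[of _ 0]) (auto simp: field_simps)
  moreover have "(n + 5 / 2) / (n + 3 / 2) = (2 * n + 5) / (2 * n + 3)"
    using \<open>n \<ge> 0\<close> by (simp add: field_simps)
  ultimately have law: "((\<lambda>V. p_fn E0 \<phi> V / (2 powr (3 / 2) * (4 / 3) * pi * C * B_const n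
      / (4 * sqrt 2 * pi * C * A_const n) powr ((2 * n + 5) / (2 * n + 3))
      * rho_fn E0 \<phi> V powr ((2 * n + 5) / (2 * n + 3)))) \<longlongrightarrow> 1) (at_left E0)"
    using tendsto_power_law_ratio[OF \<rho> p] assms A_const_pos[of n] B_const_pos[of n] by simp
  show ?thesis
    using \<rho> p law[unfolded power_law_constant[OF \<open>n \<ge> 0\<close> \<open>C > 0\<close>]] by blast
qed

end
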